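(* (i) For $(t,x)$ with $0\le t<1$ and $|x|>A^*\sqrt{1-t}$, $\mathcal{L}W^*(t,x)=0$. (ii) If $A^*>0$, then for $(t,x)$ with $0\le t<1$ and $0<|x|<A^*\sqrt{1-t}$, $\mathcal{L}W^*(t,x)\le0$. Here $$W^*(t,x)=\begin{cases}(1-t)^{q/2}G_q(|x|/\sqrt{1-t})\,w(A^* ), & |x|>A^*\sqrt{1-t},\\ h(t,x), & |x|\le A^*\sqrt{1-t}.\end{cases}$$
   Context: For a function $\xi(t,x)$, $\mathcal{L}\xi=\frac{\partial\xi}{\partial t}-\frac{x}{1-t}\frac{\partial\xi}{\partial x}+\frac12\frac{\partial^2\xi}{\partial x^2}$. $q>0$. $F_q(y):=\int_0^\infty u^{q-1}e^{yu-u^2/2}\,\mathrm{d}u$ and $G_q(y):=F_q(-y)$. $D^*>0$ is the unique positive root of $q-D(F_q+G_q)'(D)/(F_q+G_q)(D)=0$. $\overline{U}(t,x)=(1-t)^{q/2}(D^* )^q(F_q+G_q)(x/\sqrt{1-t})/(F_q+G_q)(D^* )$ if $|x|<D^*\sqrt{1-t}$, and $|x|^q$ otherwise. $h(t,x)=\overline{U}(t,x)-|x|^q$ if $|x|<D^*\sqrt{1-t}$, and $0$ otherwise. $w(A):=\frac{1}{G_q(A)}[(D^* )^q(F_q+G_q)(A)/(F_q+G_q)(D^* )-A^q]$ for $0\le A\le D^*$. $A^*$ is the unique maximizer of $w$ over $[0,D^*]$. *)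

theory Defs
  imports "HOL-Analysis.Analysis"
begin

definition Lop :: "(real \<Rightarrow> real \<Rightarrow> real) \<Rightarrow> real \<Rightarrow> real \<Rightarrow> real" where
  "Lop \<xi> t x = deriv (\<lambda>s. \<xi> s x) t - x / (1 - t) * deriv (\<lambda>y. \<xi> t y) x
      + 1/2 * deriv (\<lambda>y. deriv (\<lambda>z. \<xi> t z) y) x"

definition Fq :: "real \<Rightarrow> real \<Rightarrow> real" where
  "Fq q y = (LINT u:{0<..}|lborel. u powr (q - 1) * exp (y * u - u\<^sup>2 / 2))"

definition Gq :: "real \<Rightarrow> real \<Rightarrow> real" where
  "Gq q y = Fq q (- y)"

definition FGq :: "real \<Rightarrow> real \<Rightarrow> real" where
  "FGq q y = Fq q y + Gq q y"

definition Dstar :: "real \<Rightarrow> real" where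
  "Dstar q = (THE D. D > 0 \<and> q - D * deriv (FGq q) D / FGq q D = 0)"

definition Ubar :: "real \<Rightarrow> real \<Rightarrow> real \<Rightarrow> real" where
  "Ubar q t x = (if \<bar>x\<bar> < Dstar q * sqrt (1 - t)
     then (1 - t) powr (q / 2) * Dstar q powr q * FGq q (x / sqrt (1 - t)) / FGq q (Dstar q)
     else \<bar>x\<bar> powr q)"

definition hfun :: "real \<Rightarrow> real \<Rightarrow> real \<Rightarrow> real" where
  "hfun q t x = (if \<bar>x\<bar> < Dstar q * sqrt (1 - t) then Ubar q t x - \<bar>x\<bar> powr q else 0)"

definition wfun :: "real \<Rightarrow> real \<Rightarrow> real" where
  "wfun q A = (Dstar q powr q * FGq q A / FGq q (Dstar q) - A powr q) / Gq q A"

definition Astar :: "real \<Rightarrow> real" where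
  "Astar q = (THE A. A \<in> {0..Dstar q} \<and> (\<forall>B\<in>{0..Dstar q}. wfun q B \<le> wfun q A))"

definition Wstar :: "real \<Rightarrow> real \<Rightarrow> real \<Rightarrow> real" where
  "Wstar q t x = (if \<bar>x\<bar> > Astar q * sqrt (1 - t)
     then (1 - t) powr (q / 2) * Gq q (\<bar>x\<bar> / sqrt (1 - t)) * wfun q (Astar q)
     else hfun q t x)"

end

theory Submission
  imports Defs "HOL-Real_Asymp.Real_Asymp"
begin

text \<open>Differentiating under the integral sign and integrating by parts shows that \<open>Fq q\<close>, and
  hence \<open>Gq q\<close> and \<open>FGq q\<close>, solve \<open>\<phi>'' = y \<phi>' + q \<phi>\<close>. For such \<open>\<phi>\<close> the self-similar
  profile \<open>(1 - t)\<^bsup>q/2\<^esup> \<phi> (x / \<surd>(1 - t))\<close> is annihilated by \<open>L\<close>, while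
  \<open>L \<bar>x\<bar>\<^sup>q = q \<bar>x\<bar>\<^bsup>q-2\<^esup> ((q - 1)/2 - x\<^sup>2/(1 - t))\<close>. Hence \<open>L W* = 0\<close> outside, and
  inside \<open>L W* \<le> 0\<close> as soon as \<open>2 A*\<^sup>2 + 1 \<le> q\<close>.

  That inequality and the uniqueness of \<open>D*\<close> and of \<open>A*\<close> all come from one computation: for a
  solution \<open>g\<close>, the weighted Wronskian \<open>exp (-y\<^sup>2/2) (y\<^sup>q g' - q y\<^bsup>q-1\<^esup> g)\<close> has derivative
  \<open>q y\<^bsup>q-2\<^esup> exp (-y\<^sup>2/2) g (2y\<^sup>2 + 1 - q)\<close>. For \<open>g = FGq q\<close> it has the sign of
  \<open>y g' - q g\<close>, whose root is \<open>D*\<close>; for \<open>g = Gq q\<close> it differs by a constant from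
  \<open>exp (-y\<^sup>2/2)\<close> times the numerator of \<open>w'\<close>.\<close>

section \<open>The integrals \<open>Fq\<close>\<close>

lemma exp_linear_minus_square_le:
  fixes a u :: real
  shows "exp (a * u - u\<^sup>2 / 2) \<le> exp ((a + 1)\<^sup>2 / 2) / exp u"
proof -
  have "a * u - u\<^sup>2 / 2 \<le> (a + 1)\<^sup>2 / 2 - u"
    using sum_squares_ge_zero[of "u - (a + 1)" 0] by (simp add: power2_eq_square algebra_simps)
  then have "exp (a * u - u\<^sup>2 / 2) \<le> exp ((a + 1)\<^sup>2 / 2 - u)"
    by simp
  then show ?thesis
    by (simp add: exp_diff)
qed

lemma set_integrable_Fq_integrand:
  fixes p y :: real
  assumes "p > 0"
  shows "set_integrable lborel {0<..} (\<lambda>u. u powr (p - 1) * exp (y * u - u\<^sup>2 / 2))"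
proof -
  have "(\<lambda>u. u powr (p - 1) / exp u) absolutely_integrable_on {0..}"
    using Gamma_integral_real[OF assms]
    by (intro nonnegative_absolutely_integrable_1) (auto simp: has_integral_integrable)
  then have "set_integrable lborel {0..} (\<lambda>u. u powr (p - 1) / exp u)"
    unfolding set_integrable_def by (subst (asm) integrable_completion) auto
  then have "set_integrable lborel {0<..} (\<lambda>u. u powr (p - 1) / exp u)"
    by (rule set_integrable_subset) auto
  then have "set_integrable lborel {0<..} (\<lambda>u. exp ((y + 1)\<^sup>2 / 2) * (u powr (p - 1) / exp u))"
    by (rule set_integrable_mult_right)
  then show ?thesis
    unfolding set_integrable_def
  proof (rule Bochner_Integration.integrable_bound)
    show "AE u in lborel. norm (indicat_real {0<..} u *\<^sub>R (u powr (p - 1) * exp (y * u - u\<^sup>2 / 2)))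
        \<le> norm (indicat_real {0<..} u *\<^sub>R (exp ((y + 1)\<^sup>2 / 2) * (u powr (p - 1) / exp u)))"
    proof (rule AE_I2)
      fix u :: real
      have "u powr (p - 1) * exp (y * u - u\<^sup>2 / 2) \<le> u powr (p - 1) * (exp ((y + 1)\<^sup>2 / 2) / exp u)"
        by (rule mult_left_mono[OF exp_linear_minus_square_le]) simp
      then show "norm (indicat_real {0<..} u *\<^sub>R (u powr (p - 1) * exp (y * u - u\<^sup>2 / 2)))
          \<le> norm (indicat_real {0<..} u *\<^sub>R (exp ((y + 1)\<^sup>2 / 2) * (u powr (p - 1) / exp u)))"
        by (auto simp: indicator_def abs_mult mult_ac)
    qed
  qed measurable
qed

lemma Fq_pos:
  fixes p y :: real
  assumes "p > 0"
  shows "Fq p y > 0"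
proof -
  let ?f = "\<lambda>u::real. indicator {0<..} u *\<^sub>R (u powr (p - 1) * exp (y * u - u\<^sup>2 / 2))"
  have int: "integrable lborel ?f" and nonneg: "AE u in lborel. 0 \<le> ?f u"
    using set_integrable_Fq_integrand[OF assms, of y] by (auto simp: set_integrable_def indicator_def)
  have "integral\<^sup>L lborel ?f \<noteq> 0"
  proof
    assume "integral\<^sup>L lborel ?f = 0"
    then have "AE u in lborel. ?f u = 0"
      using integral_nonneg_eq_0_iff_AE[OF int nonneg] by simp
    then have "AE u in lborel. u \<notin> {0::real<..}"
      by (rule eventually_mono) (auto simp: indicator_def)
    then have "emeasure lborel {0::real<..} = 0"
      by (subst (asm) AE_iff_measurable[where N="{0<..}"]) auto
    moreover have "emeasure lborel {0<..<1::real} \<le> emeasure lborel {0::real<..}"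
      by (rule emeasure_mono) (auto simp: greaterThan_def)
    ultimately show False
      by simp
  qed
  moreover have "integral\<^sup>L lborel ?f \<ge> 0"
    by (rule integral_nonneg_AE[OF nonneg])
  ultimately have "integral\<^sup>L lborel ?f > 0"
    by linarith
  then show ?thesis
    by (simp add: Fq_def set_lebesgue_integral_def)
qed

lemma exp_minus_one_bound:
  fixes x :: real
  shows "\<bar>exp x - 1\<bar> \<le> \<bar>x\<bar> * exp \<bar>x\<bar>"
proof (cases "x \<ge> 0")
  case True
  have "(1 - x) * exp x \<le> exp (-x) * exp x"
    using exp_ge_add_one_self[of "-x"] by (intro mult_right_mono) auto
  with True show ?thesis
    by (simp add: exp_minus field_simps)
next
  case False
  then have "-x \<le> -x * exp (-x)"
    by simp
  then have "1 - exp x \<le> -x * exp (-x)"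
    using exp_ge_add_one_self[of x] by linarith
  with False show ?thesis
    by simp
qed

lemma exp_difference_quotient_bound:
  fixes h K u :: real
  assumes "h \<noteq> 0" "\<bar>h\<bar> \<le> K"
  shows "\<bar>(exp (h * u) - 1) / h\<bar> \<le> \<bar>u\<bar> * (exp (K * u) + exp (- K * u))"
proof -
  have "\<bar>(exp (h * u) - 1) / h\<bar> \<le> \<bar>u\<bar> * exp \<bar>h * u\<bar>"
    using exp_minus_one_bound[of "h * u"] assms(1) by (simp add: abs_mult divide_le_eq mult_ac)
  also have "\<dots> \<le> \<bar>u\<bar> * (exp (K * u) + exp (- K * u))"
    using assms(2) by (cases "u \<ge> 0")
      (auto intro!: mult_left_mono simp: abs_mult add_increasing2 add_increasing mult_right_mono)
  finally show ?thesis .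
qed

lemma has_real_derivative_exponential_transform:
  fixes g :: "real \<Rightarrow> real"
  assumes int: "\<And>z. integrable lborel (\<lambda>u. g u * exp (z * u))"
    and int': "\<And>z. integrable lborel (\<lambda>u. g u * u * exp (z * u))"
  shows "((\<lambda>z. LINT u|lborel. g u * exp (z * u)) has_real_derivative
           (LINT u|lborel. g u * u * exp (y * u))) (at y)"
  unfolding DERIV_def tendsto_at_iff_sequentially comp_def
proof (intro allI impI)
  fix X :: "nat \<Rightarrow> real"
  assume X0: "\<forall>n. X n \<in> UNIV - {0}" and X: "X \<longlonglongrightarrow> 0"
  obtain K where K: "\<And>n. \<bar>X n\<bar> \<le> K"
    using convergent_imp_Bseq[OF convergentI[OF X]] by (metis BseqE real_norm_def)
  define s where "s n u = g u * exp (y * u) * ((exp (X n * u) - 1) / X n)" for n u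
  have quotient: "(LINT u|lborel. g u * exp ((y + X n) * u)) - (LINT u|lborel. g u * exp (y * u))
      = X n * integral\<^sup>L lborel (s n)" for n
  proof -
    have "X n * s n u = g u * exp ((y + X n) * u) - g u * exp (y * u)" for u
      using X0 by (simp add: s_def field_simps exp_add distrib_right)
    then show ?thesis
      using int[of "y + X n"] int[of y] by (simp flip: integral_mult_right_zero)
  qed
  have "(\<lambda>n. integral\<^sup>L lborel (s n)) \<longlonglongrightarrow> (LINT u|lborel. g u * u * exp (y * u))"
  proof (rule integral_dominated_convergence
      [where w = "\<lambda>u. \<bar>g u * u * exp ((y + K) * u)\<bar> + \<bar>g u * u * exp ((y - K) * u)\<bar>"])
    show "integrable lborel (\<lambda>u. \<bar>g u * u * exp ((y + K) * u)\<bar> + \<bar>g u * u * exp ((y - K) * u)\<bar>)"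
      using int' by auto
    show "(\<lambda>u. g u * u * exp (y * u)) \<in> borel_measurable lborel"
      using int' borel_measurable_integrable by blast
    show "s n \<in> borel_measurable lborel" for n
      using borel_measurable_integrable[OF int[of y]] unfolding s_def by measurable
    show "AE u in lborel. (\<lambda>n. s n u) \<longlonglongrightarrow> g u * u * exp (y * u)"
    proof (rule AE_I2)
      fix u
      have "((\<lambda>h. exp (h * u)) has_real_derivative exp (0 * u) * u) (at 0)"
        by (auto intro!: derivative_eq_intros)
      then have "((\<lambda>h. (exp ((0 + h) * u) - exp (0 * u)) / h) \<longlongrightarrow> u) (at 0)"
        unfolding DERIV_def by simp
      then have "(\<lambda>n. (exp (X n * u) - 1) / X n) \<longlonglongrightarrow> u"
        using X0 X unfolding tendsto_at_iff_sequentially by (auto simp: comp_def)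
      then have "(\<lambda>n. s n u) \<longlonglongrightarrow> g u * exp (y * u) * u"
        unfolding s_def by (rule tendsto_mult_left)
      then show "(\<lambda>n. s n u) \<longlonglongrightarrow> g u * u * exp (y * u)"
        by (simp only: mult_ac)
    qed
    show "AE u in lborel. norm (s n u)
        \<le> \<bar>g u * u * exp ((y + K) * u)\<bar> + \<bar>g u * u * exp ((y - K) * u)\<bar>" for n
    proof (rule AE_I2)
      fix u
      have "norm (s n u) = \<bar>g u\<bar> * exp (y * u) * \<bar>(exp (X n * u) - 1) / X n\<bar>"
        by (simp add: s_def abs_mult)
      also have "\<dots> \<le> \<bar>g u\<bar> * exp (y * u) * (\<bar>u\<bar> * (exp (K * u) + exp (- K * u)))"
        using X0 K[of n] by (intro mult_left_mono exp_difference_quotient_bound) auto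
      also have "\<dots> = \<bar>g u * u * exp ((y + K) * u)\<bar> + \<bar>g u * u * exp ((y - K) * u)\<bar>"
      proof -
        have "exp ((y + K) * u) = exp (y * u) * exp (K * u)"
          by (simp add: distrib_right exp_add)
        moreover have "exp ((y - K) * u) = exp (y * u) * exp (- K * u)"
          by (simp add: left_diff_distrib exp_diff exp_minus divide_inverse)
        ultimately show ?thesis
          by (simp add: abs_mult distrib_left mult_ac)
      qed
      finally show "norm (s n u) \<le> \<bar>g u * u * exp ((y + K) * u)\<bar> + \<bar>g u * u * exp ((y - K) * u)\<bar>" .
    qed
  qed
  then show "(\<lambda>n. ((LINT u|lborel. g u * exp ((y + X n) * u)) - (LINT u|lborel. g u * exp (y * u))) / X n)
      \<longlonglongrightarrow> (LINT u|lborel. g u * u * exp (y * u))"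
    using X0 by (simp add: quotient)
qed

lemma Fq_exponential_transform:
  "Fq p z = (LINT u|lborel. indicator {0<..} u * (u powr (p - 1) * exp (- u\<^sup>2 / 2)) * exp (z * u))"
  unfolding Fq_def set_lebesgue_integral_def
  by (rule Bochner_Integration.integral_cong) (auto simp: exp_add[symmetric] indicator_def)

lemma integrable_Fq_transform:
  fixes p z :: real
  assumes "p > 0"
  shows "integrable lborel (\<lambda>u. indicator {0<..} u * (u powr (p - 1) * exp (- u\<^sup>2 / 2)) * exp (z * u))"
  using set_integrable_Fq_integrand[OF assms, of z] unfolding set_integrable_def
  by (rule back_subst[of "integrable lborel"]) (auto simp: fun_eq_iff indicator_def exp_add[symmetric])

lemma has_real_derivative_Fq:
  assumes "p > 0"
  shows "(Fq p has_real_derivative Fq (p + 1) y) (at y)"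
proof -
  define g where "g u = indicator {0<..} u * (u powr (p - 1) * exp (- u\<^sup>2 / 2))" for u :: real
  have shift: "g u * u = indicator {0<..} u * (u powr (p + 1 - 1) * exp (- u\<^sup>2 / 2))" for u
    by (simp add: g_def indicator_def powr_mult_base mult_ac)
  have "integrable lborel (\<lambda>u. g u * exp (z * u))" for z
    unfolding g_def by (rule integrable_Fq_transform[OF assms])
  moreover have "integrable lborel (\<lambda>u. g u * u * exp (z * u))" for z
    unfolding shift using assms by (intro integrable_Fq_transform) simp
  ultimately have "((\<lambda>z. LINT u|lborel. g u * exp (z * u)) has_real_derivative
      (LINT u|lborel. g u * u * exp (y * u))) (at y)"
    by (rule has_real_derivative_exponential_transform)
  moreover have "Fq p = (\<lambda>z. LINT u|lborel. g u * exp (z * u))"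
    by (simp add: fun_eq_iff g_def Fq_exponential_transform)
  moreover have "Fq (p + 1) y = (LINT u|lborel. g u * u * exp (y * u))"
    by (simp only: shift Fq_exponential_transform)
  ultimately show ?thesis
    by simp
qed

text \<open>Integration by parts: \<open>u\<^sup>p exp (y u - u\<^sup>2/2)\<close> vanishes at \<open>0\<close> and \<open>\<infinity>\<close>.\<close>

lemma Fq_recurrence:
  assumes p: "p > 0"
  shows "Fq (p + 2) y = y * Fq (p + 1) y + p * Fq p y"
proof -
  define e where "e u = exp (y * u - u\<^sup>2 / 2)" for u :: real
  define f where "f u = p * (u powr (p - 1) * e u) + y * (u powr (p + 1 - 1) * e u)
      - u powr (p + 2 - 1) * e u" for u
  have int: "set_integrable lborel {0<..} (\<lambda>u. u powr (r - 1) * e u)" if "r > 0" for r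
    unfolding e_def using set_integrable_Fq_integrand[OF that] .
  have int_f: "set_integrable lborel {0<..} f"
    unfolding f_def using p
    by (intro set_integral_diff(1) set_integral_add(1) set_integrable_mult_right int) auto
  have "(LBINT u=ereal 0..\<infinity>. f u) = 0 - 0"
  proof (rule interval_integral_FTC_integrable[where F = "\<lambda>u. u powr p * e u"])
    fix u :: real
    assume "ereal 0 < ereal u"
    then have u: "u > 0"
      by simp
    have "u powr (p + 1) = u powr p * u" "u powr (p + 2 - 1) = u powr p * u"
      using u by (simp_all add: powr_add)
    then have "p * u powr (p - 1) * e u + u powr p * (e u * (y - u)) = f u"
      by (simp add: f_def algebra_simps)
    moreover have "((\<lambda>u. u powr p * e u) has_real_derivative
        p * u powr (p - 1) * e u + u powr p * (e u * (y - u))) (at u)"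
      unfolding e_def using u by (auto intro!: derivative_eq_intros simp: power2_eq_square)
    ultimately show "((\<lambda>u. u powr p * e u) has_vector_derivative f u) (at u)"
      by (simp add: has_real_derivative_iff_has_vector_derivative)
    show "isCont f u"
      unfolding f_def e_def using u by (intro continuous_intros) auto
  next
    show "set_integrable lborel (einterval (ereal 0) \<infinity>) f"
      using int_f by (simp add: einterval_eq_Ici)
    have "((\<lambda>u. u powr p * e u) \<longlongrightarrow> 0) (at_right 0)"
      unfolding e_def using p by real_asymp
    then show "(((\<lambda>u. u powr p * e u) \<circ> real_of_ereal) \<longlongrightarrow> 0) (at_right (ereal 0))"
      by (simp add: ereal_tendsto_simps1)
    have "((\<lambda>u. u powr p * e u) \<longlongrightarrow> 0) at_top"
      unfolding e_def by real_asymp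
    then show "(((\<lambda>u. u powr p * e u) \<circ> real_of_ereal) \<longlongrightarrow> 0) (at_left \<infinity>)"
      by (simp add: ereal_tendsto_simps1)
  qed simp
  moreover have "(LBINT u=ereal 0..\<infinity>. f u) = p * Fq p y + y * Fq (p + 1) y - Fq (p + 2) y"
  proof -
    have "set_integrable lborel {0<..} (\<lambda>u. u powr (p + 1 - 1) * e u)"
      "set_integrable lborel {0<..} (\<lambda>u. u powr (p + 2 - 1) * e u)"
      using p by (simp_all only: int add_pos_pos zero_less_one zero_less_numeral)
    with int[OF p] have "(LINT u:{0<..}|lborel. f u) = p * Fq p y + y * Fq (p + 1) y - Fq (p + 2) y"
      unfolding f_def
      by (simp only: set_integral_diff set_integral_add set_integrable_mult_right
          set_integral_mult_right Fq_def e_def)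
    then show ?thesis
      by (simp add: interval_lebesgue_integral_def einterval_eq_Ici)
  qed
  ultimately show ?thesis
    by simp
qed

section \<open>Solutions of \<open>\<phi>'' = y \<phi>' + q \<phi>\<close>\<close>

definition Fq_ode_solution :: "real \<Rightarrow> (real \<Rightarrow> real) \<Rightarrow> (real \<Rightarrow> real) \<Rightarrow> bool" where
  "Fq_ode_solution q \<phi> \<phi>' \<longleftrightarrow>
     (\<forall>y. (\<phi> has_real_derivative \<phi>' y) (at y)) \<and>
     (\<forall>y. (\<phi>' has_real_derivative y * \<phi>' y + q * \<phi> y) (at y))"

lemma Fq_ode_solution_deriv:
  "Fq_ode_solution q \<phi> \<phi>' \<Longrightarrow> (\<phi> has_real_derivative \<phi>' y) (at y)"
  by (simp add: Fq_ode_solution_def)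

lemma Fq_ode_solution_deriv2:
  "Fq_ode_solution q \<phi> \<phi>' \<Longrightarrow> (\<phi>' has_real_derivative y * \<phi>' y + q * \<phi> y) (at y)"
  by (simp add: Fq_ode_solution_def)

lemma Fq_ode_solution_Fq:
  assumes "q > 0"
  shows "Fq_ode_solution q (Fq q) (Fq (q + 1))"
proof -
  have "(Fq (q + 1) has_real_derivative Fq (q + 1 + 1) y) (at y)" for y
    using assms by (intro has_real_derivative_Fq) simp
  moreover have "Fq (q + 1 + 1) y = y * Fq (q + 1) y + q * Fq q y" for y
    using Fq_recurrence[OF assms, of y] by (simp add: add.assoc)
  ultimately show ?thesis
    using has_real_derivative_Fq[OF assms] by (simp add: Fq_ode_solution_def)
qed

lemma Fq_ode_solution_reflect:
  assumes "Fq_ode_solution q \<phi> \<phi>'" and "\<sigma>\<^sup>2 = 1"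
  shows "Fq_ode_solution q (\<lambda>y. \<phi> (\<sigma> * y)) (\<lambda>y. \<sigma> * \<phi>' (\<sigma> * y))"
  unfolding Fq_ode_solution_def
proof (intro conjI allI)
  fix y
  have scale: "((\<lambda>y. \<sigma> * y) has_real_derivative \<sigma>) (at y)"
    by (auto intro!: derivative_eq_intros)
  show "((\<lambda>y. \<phi> (\<sigma> * y)) has_real_derivative \<sigma> * \<phi>' (\<sigma> * y)) (at y)"
    using DERIV_chain2[OF Fq_ode_solution_deriv[OF assms(1)] scale] by (simp add: mult.commute)
  have "\<sigma> * ((\<sigma> * y * \<phi>' (\<sigma> * y) + q * \<phi> (\<sigma> * y)) * \<sigma>) = y * (\<sigma> * \<phi>' (\<sigma> * y)) + q * \<phi> (\<sigma> * y)"
    using assms(2) by (simp add: power2_eq_square distrib_left distrib_right mult.assoc[symmetric])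
  then show "((\<lambda>y. \<sigma> * \<phi>' (\<sigma> * y)) has_real_derivative y * (\<sigma> * \<phi>' (\<sigma> * y)) + q * \<phi> (\<sigma> * y)) (at y)"
    using DERIV_cmult[OF DERIV_chain2[OF Fq_ode_solution_deriv2[OF assms(1)] scale], of \<sigma>] by (simp only:)
qed

lemma Fq_ode_solution_add:
  assumes "Fq_ode_solution q \<phi> \<phi>'" and "Fq_ode_solution q \<psi> \<psi>'"
  shows "Fq_ode_solution q (\<lambda>y. \<phi> y + \<psi> y) (\<lambda>y. \<phi>' y + \<psi>' y)"
  using assms unfolding Fq_ode_solution_def
  by (auto intro!: DERIV_cong[OF DERIV_add] simp: algebra_simps)

lemma Fq_ode_solution_Gq:
  assumes "q > 0"
  shows "Fq_ode_solution q (Gq q) (\<lambda>y. - Fq (q + 1) (- y))"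
  using Fq_ode_solution_reflect[OF Fq_ode_solution_Fq[OF assms], of "-1"]
  by (simp add: Gq_def[abs_def])

lemma Fq_ode_solution_FGq:
  assumes "q > 0"
  shows "Fq_ode_solution q (FGq q) (\<lambda>y. Fq (q + 1) y - Fq (q + 1) (- y))"
  using Fq_ode_solution_add[OF Fq_ode_solution_Fq Fq_ode_solution_Gq, OF assms assms]
  by (simp add: FGq_def[abs_def])

lemma Gq_pos: "q > 0 \<Longrightarrow> Gq q y > 0"
  by (simp add: Gq_def Fq_pos)

lemma FGq_pos: "q > 0 \<Longrightarrow> FGq q y > 0"
  by (simp add: FGq_def Gq_pos Fq_pos add_pos_pos)

text \<open>For two solutions the derivative vanishes (Abel's identity).\<close>

definition scaled_wronskian ::
    "(real \<Rightarrow> real) \<Rightarrow> (real \<Rightarrow> real) \<Rightarrow> (real \<Rightarrow> real) \<Rightarrow> (real \<Rightarrow> real) \<Rightarrow> real \<Rightarrow> real" where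
  "scaled_wronskian f f' g g' y = exp (- y\<^sup>2 / 2) * (f y * g' y - f' y * g y)"

lemma has_real_derivative_scaled_wronskian:
  assumes f: "(f has_real_derivative f' y) (at y)" and f': "(f' has_real_derivative f'') (at y)"
    and g: "Fq_ode_solution q g g'"
  shows "(scaled_wronskian f f' g g' has_real_derivative
           exp (- y\<^sup>2 / 2) * g y * (q * f y + y * f' y - f'')) (at y)"
  unfolding scaled_wronskian_def[abs_def]
  by (rule DERIV_cong, rule derivative_eq_intros f f' Fq_ode_solution_deriv[OF g]
      Fq_ode_solution_deriv2[OF g] refl | simp)+
     (simp add: algebra_simps power2_eq_square)

abbreviation power_wronskian :: "real \<Rightarrow> (real \<Rightarrow> real) \<Rightarrow> (real \<Rightarrow> real) \<Rightarrow> real \<Rightarrow> real" where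
  "power_wronskian q \<equiv> scaled_wronskian (\<lambda>y. y powr q) (\<lambda>y. q * y powr (q - 1))"

lemma has_real_derivative_power_wronskian:
  assumes "y > 0" and "Fq_ode_solution q g g'"
  shows "(power_wronskian q g g' has_real_derivative
           exp (- y\<^sup>2 / 2) * g y * (q * y powr (q - 2)) * (2 * y\<^sup>2 + 1 - q)) (at y)"
proof -
  have "y powr q = y powr (q - 2) * y\<^sup>2" "y powr (q - 1) = y powr (q - 2) * y"
    using assms(1) powr_add[of y "q - 2" 2] powr_add[of y "q - 2" 1] by (simp_all add: powr_numeral)
  then have "q * y powr q + y * (q * y powr (q - 1)) - q * ((q - 1) * y powr (q - 1 - 1))
      = q * y powr (q - 2) * (2 * y\<^sup>2 + 1 - q)"
    by (simp add: algebra_simps power2_eq_square)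
  moreover have "(power_wronskian q g g' has_real_derivative
      exp (- y\<^sup>2 / 2) * g y * (q * y powr q + y * (q * y powr (q - 1)) - q * ((q - 1) * y powr (q - 1 - 1)))) (at y)"
    using assms by (intro has_real_derivative_scaled_wronskian DERIV_cmult has_real_derivative_powr)
  ultimately show ?thesis
    by (simp only: mult.assoc)
qed

lemma decreasing_below_critical:
  fixes f d :: "real \<Rightarrow> real"
  assumes "0 \<le> a" "a < b" "2 * b\<^sup>2 + 1 \<le> q" "continuous_on {a..b} f"
    and deriv: "\<And>s. a < s \<Longrightarrow> s < b \<Longrightarrow> (f has_real_derivative d s * (2 * s\<^sup>2 + 1 - q)) (at s)"
    and pos: "\<And>s. a < s \<Longrightarrow> s < b \<Longrightarrow> d s > 0"
  shows "f b < f a"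
proof (rule DERIV_neg_imp_decreasing_open[OF assms(2) _ assms(4)])
  fix s
  assume s: "a < s" "s < b"
  then have "s\<^sup>2 < b\<^sup>2"
    using assms(1) by (intro power_strict_mono) auto
  then have "d s * (2 * s\<^sup>2 + 1 - q) < 0"
    using assms(3) pos[OF s] by (simp add: mult_pos_neg)
  then show "\<exists>y. (f has_real_derivative y) (at s) \<and> y < 0"
    using deriv[OF s] by blast
qed

lemma increasing_above_critical:
  fixes f d :: "real \<Rightarrow> real"
  assumes "0 \<le> a" "a < b" "q \<le> 2 * a\<^sup>2 + 1" "continuous_on {a..b} f"
    and deriv: "\<And>s. a < s \<Longrightarrow> s < b \<Longrightarrow> (f has_real_derivative d s * (2 * s\<^sup>2 + 1 - q)) (at s)"
    and pos: "\<And>s. a < s \<Longrightarrow> s < b \<Longrightarrow> d s > 0"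
  shows "f a < f b"
proof (rule DERIV_pos_imp_increasing_open[OF assms(2) _ assms(4)])
  fix s
  assume s: "a < s" "s < b"
  then have "a\<^sup>2 < s\<^sup>2"
    using assms(1) by (intro power_strict_mono) auto
  then have "d s * (2 * s\<^sup>2 + 1 - q) > 0"
    using assms(3) pos[OF s] by simp
  then show "\<exists>y. (f has_real_derivative y) (at s) \<and> y > 0"
    using deriv[OF s] by blast
qed

section \<open>The operator \<open>Lop\<close>\<close>

lemma Lop_eq_of_derivatives:
  assumes "((\<lambda>s. V s x) has_real_derivative Vt) (at t)"
    and "open N" "x \<in> N"
    and "\<And>z. z \<in> N \<Longrightarrow> (V t has_real_derivative Vx z) (at z)"
    and "(Vx has_real_derivative Vxx) (at x)"
  shows "Lop V t x = Vt - x / (1 - t) * Vx x + 1 / 2 * Vxx"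
proof -
  have "deriv (\<lambda>y. deriv (V t) y) x = deriv Vx x"
    using assms(2-4)
    by (intro deriv_cong_ev eventually_nhds_in_open[THEN eventually_mono] DERIV_imp_deriv) auto
  then show ?thesis
    using assms by (simp add: Lop_def DERIV_imp_deriv)
qed

lemma Lop_cong_open:
  assumes "open S" "(t, x) \<in> S" and eq: "\<And>s z. (s, z) \<in> S \<Longrightarrow> W s z = V s z"
  shows "Lop W t x = Lop V t x"
proof -
  have "continuous_on UNIV (\<lambda>s::real. (s, x))" "continuous_on UNIV (\<lambda>z::real. (t, z))"
    by (intro continuous_intros)+
  from this[THEN open_vimage[OF assms(1)]]
  have time_slice: "open {s. (s, x) \<in> S}" and space_slice: "open {z. (t, z) \<in> S}"
    by (simp_all add: vimage_def)
  have "deriv (\<lambda>s. W s x) t = deriv (\<lambda>s. V s x) t"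
    using assms by (intro deriv_cong_ev eventually_nhds_in_open[OF time_slice, THEN eventually_mono]) auto
  moreover have space: "deriv (W t) z = deriv (V t) z" if "(t, z) \<in> S" for z
    using that eq by (intro deriv_cong_ev eventually_nhds_in_open[OF space_slice, THEN eventually_mono]) auto
  moreover have "deriv (\<lambda>y. deriv (W t) y) x = deriv (\<lambda>y. deriv (V t) y) x"
    using assms(2) space eq by (intro deriv_cong_ev eventually_nhds_in_open[OF space_slice, THEN eventually_mono]) auto
  ultimately show ?thesis
    using assms(2) by (simp add: Lop_def)
qed

lemma has_real_derivative_abs_powr:
  fixes x p :: real
  assumes "x \<noteq> 0"
  shows "((\<lambda>z. \<bar>z\<bar> powr p) has_real_derivative p * \<bar>x\<bar> powr (p - 1) * sgn x) (at x)"
proof (rule has_field_derivative_transform_within_open)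
  have "sgn x * x = \<bar>x\<bar>"
    by (simp add: sgn_real_def)
  then show "((\<lambda>z. (sgn x * z) powr p) has_real_derivative p * \<bar>x\<bar> powr (p - 1) * sgn x) (at x)"
    using assms by (auto intro!: derivative_eq_intros)
  show "open {z. 0 < z * x}"
    by (intro open_Collect_less continuous_intros)
  show "(sgn x * z) powr p = \<bar>z\<bar> powr p" if "z \<in> {z. 0 < z * x}" for z
    using that by (auto simp: zero_less_mult_iff)
qed (use assms in \<open>auto simp: zero_less_mult_iff\<close>)

lemma has_real_derivative_sgn:
  fixes x :: real
  assumes "x \<noteq> 0"
  shows "(sgn has_real_derivative 0) (at x)"
proof (rule has_field_derivative_transform_within_open[OF DERIV_const[of "sgn x"]])
  show "open {z. 0 < z * x}"
    by (intro open_Collect_less continuous_intros)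
qed (use assms in \<open>auto simp: zero_less_mult_iff\<close>)

lemma has_real_derivative_scaled_profile:
  fixes t x q :: real
  assumes t: "t < 1"
    and \<phi>: "(\<phi> has_real_derivative \<phi>' (x / sqrt (1 - t))) (at (x / sqrt (1 - t)))"
  shows "((\<lambda>s. (1 - s) powr (q / 2) * \<phi> (x / sqrt (1 - s))) has_real_derivative
      (1 - t) powr (q / 2) / (1 - t) *
        (x / sqrt (1 - t) * \<phi>' (x / sqrt (1 - t)) - q * \<phi> (x / sqrt (1 - t))) / 2) (at t)"
proof -
  have pos: "1 - t > 0" "sqrt (1 - t) > 0"
    using t by simp_all
  have argument: "((\<lambda>s. x / sqrt (1 - s)) has_real_derivative x / sqrt (1 - t) / (1 - t) / 2) (at t)"
    using pos by (auto intro!: derivative_eq_intros simp: field_simps power2_eq_square real_sqrt_mult[symmetric])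
  have factor: "((\<lambda>s. (1 - s) powr (q / 2)) has_real_derivative - (q / 2) * ((1 - t) powr (q / 2) / (1 - t))) (at t)"
    using pos by (auto intro!: derivative_eq_intros simp: powr_diff)
  show ?thesis
    using pos by (intro DERIV_cong[OF DERIV_mult[OF factor DERIV_chain2[OF \<phi> argument]]])
      (simp add: algebra_simps diff_divide_distrib)
qed

text \<open>The profile term drops out precisely because \<open>\<phi>\<close> solves the ODE.\<close>

lemma Lop_scaled_profile_minus_abs_powr:
  fixes k e q t x :: real
  assumes sol: "Fq_ode_solution q \<phi> \<phi>'" and t: "t < 1" and x: "x \<noteq> 0"
  shows "Lop (\<lambda>s z. k * ((1 - s) powr (q / 2) * \<phi> (z / sqrt (1 - s))) - e * \<bar>z\<bar> powr q) t x
       = e * q * \<bar>x\<bar> powr (q - 2) * (x\<^sup>2 / (1 - t) - (q - 1) / 2)"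
proof -
  define V where "V s z = k * ((1 - s) powr (q / 2) * \<phi> (z / sqrt (1 - s))) - e * \<bar>z\<bar> powr q" for s z
  define a where "a = 1 - t"
  define r where "r = sqrt a"
  define A where "A = a powr (q / 2)"
  define y where "y = x / r"
  have a: "a > 0" and r: "r > 0" "r * r = a"
    using t by (auto simp: a_def r_def)
  define Vx where "Vx z = k * (A * \<phi>' (z / r) / r) - e * (q * \<bar>z\<bar> powr (q - 1) * sgn z)" for z
  have time: "((\<lambda>s. V s x) has_real_derivative k * (A / a * (y * \<phi>' y - q * \<phi> y) / 2)) (at t)"
    using DERIV_cmult[OF has_real_derivative_scaled_profile[where x = x and q = q and \<phi>' = \<phi>',
          OF t Fq_ode_solution_deriv[OF sol]], of k]
    unfolding V_def by (intro DERIV_cong[OF DERIV_diff[OF _ DERIV_const]]) (auto simp: y_def r_def a_def A_def)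
  have linear: "((\<lambda>z. z / r) has_real_derivative 1 / r) (at z)" for z
    using DERIV_cdivide[OF DERIV_ident, of r z] by simp
  have slice: "V t = (\<lambda>z. k * (A * \<phi> (z / r)) - e * \<bar>z\<bar> powr q)"
    by (simp add: fun_eq_iff V_def A_def r_def a_def)
  have space: "(V t has_real_derivative Vx z) (at z)" if "z \<noteq> 0" for z
    unfolding Vx_def slice
    by (intro DERIV_cong[OF DERIV_diff[OF DERIV_cmult[OF DERIV_cmult[OF DERIV_chain2[OF
          Fq_ode_solution_deriv[OF sol] linear]]] DERIV_cmult[OF has_real_derivative_abs_powr[OF that]]]])
      auto
  have space2: "(Vx has_real_derivative
      k * (A * (y * \<phi>' y + q * \<phi> y) / r / r) - e * (q * ((q - 1) * \<bar>x\<bar> powr (q - 2)))) (at x)"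
    unfolding Vx_def
    by (intro DERIV_cong[OF DERIV_diff[OF DERIV_cmult[OF DERIV_cdivide[OF DERIV_cmult[OF DERIV_chain2[OF
          Fq_ode_solution_deriv2[OF sol] linear]]]]
        DERIV_cmult[OF DERIV_mult[OF DERIV_cmult[OF has_real_derivative_abs_powr[OF x]] has_real_derivative_sgn[OF x]]]]])
      (use x r in \<open>simp add: y_def sgn_mult_self_eq field_simps\<close>)
  have "Lop V t x = k * (A / a * (y * \<phi>' y - q * \<phi> y) / 2) - x / (1 - t) * Vx x
      + 1 / 2 * (k * (A * (y * \<phi>' y + q * \<phi> y) / r / r) - e * (q * ((q - 1) * \<bar>x\<bar> powr (q - 2))))"
    using x by (intro Lop_eq_of_derivatives[OF time _ _ space space2, of "- {0}"]) auto
  also have "x / (1 - t) * Vx x = k * (A / a * (y * \<phi>' y)) - e * q * (\<bar>x\<bar> powr (q - 2) * x\<^sup>2) / a"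
  proof -
    have "x * sgn x * \<bar>x\<bar> powr (q - 1) = \<bar>x\<bar> powr (q - 2) * x\<^sup>2"
      using x powr_add[of "\<bar>x\<bar>" "q - 2" 1] by (simp add: sgn_real_def power2_eq_square)
    then show ?thesis
      using r a unfolding Vx_def y_def a_def[symmetric] by (simp add: field_simps)
  qed
  also have "A * (y * \<phi>' y + q * \<phi> y) / r / r = A / a * (y * \<phi>' y + q * \<phi> y)"
    using r by (simp add: divide_divide_eq_left)
  also have "k * (A / a * (y * \<phi>' y - q * \<phi> y) / 2)
      - (k * (A / a * (y * \<phi>' y)) - e * q * (\<bar>x\<bar> powr (q - 2) * x\<^sup>2) / a)
      + 1 / 2 * (k * (A / a * (y * \<phi>' y + q * \<phi> y)) - e * (q * ((q - 1) * \<bar>x\<bar> powr (q - 2))))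
      = e * q * \<bar>x\<bar> powr (q - 2) * (x\<^sup>2 / (1 - t) - (q - 1) / 2)"
    unfolding a_def[symmetric] using a by (simp add: field_simps)
  finally show ?thesis
    by (simp add: V_def)
qed

section \<open>The root \<open>Dstar\<close>\<close>

locale positive_Fq_ode_solution =
  fixes q :: real and \<Phi> \<Phi>' :: "real \<Rightarrow> real"
  assumes q_pos: "q > 0" and solution: "Fq_ode_solution q \<Phi> \<Phi>'"
    and Phi_pos: "\<And>y. \<Phi> y > 0" and Phi'_0: "\<Phi>' 0 = 0"
begin

lemma Phi_deriv: "(\<Phi> has_real_derivative \<Phi>' y) (at y)"
  using solution by (rule Fq_ode_solution_deriv)

lemma Phi'_deriv: "(\<Phi>' has_real_derivative y * \<Phi>' y + q * \<Phi> y) (at y)"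
  using solution by (rule Fq_ode_solution_deriv2)

lemma weighted_Phi'_strict_mono:
  assumes "a < b"
  shows "exp (- a\<^sup>2 / 2) * \<Phi>' a < exp (- b\<^sup>2 / 2) * \<Phi>' b"
proof -
  have deriv: "(scaled_wronskian (\<lambda>_. 1) (\<lambda>_. 0) \<Phi> \<Phi>' has_real_derivative exp (- y\<^sup>2 / 2) * \<Phi> y * q) (at y)" for y
    using has_real_derivative_scaled_wronskian[where f' = "\<lambda>_. 0", OF DERIV_const[of 1] DERIV_const[of 0] solution]
    by simp
  have "scaled_wronskian (\<lambda>_. 1) (\<lambda>_. 0) \<Phi> \<Phi>' a < scaled_wronskian (\<lambda>_. 1) (\<lambda>_. 0) \<Phi> \<Phi>' b"
  proof (rule DERIV_pos_imp_increasing[OF assms])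
    fix y
    show "\<exists>d. (scaled_wronskian (\<lambda>_. 1) (\<lambda>_. 0) \<Phi> \<Phi>' has_real_derivative d) (at y) \<and> 0 < d"
      using deriv[of y] Phi_pos[of y] q_pos by (intro exI[of _ "exp (- y\<^sup>2 / 2) * \<Phi> y * q"] conjI) simp_all
  qed
  then show ?thesis
    by (simp add: scaled_wronskian_def)
qed

lemma Phi'_pos: "y > 0 \<Longrightarrow> \<Phi>' y > 0"
  using weighted_Phi'_strict_mono[of 0 y] by (simp add: Phi'_0 zero_less_mult_iff)

lemma Phi'_lower_bound:
  assumes "y \<ge> 1"
  shows "exp (- 1 / 2) * \<Phi>' 1 * exp (y\<^sup>2 / 2) \<le> \<Phi>' y"
proof -
  have "exp (- 1 / 2) * \<Phi>' 1 \<le> exp (- y\<^sup>2 / 2) * \<Phi>' y"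
  proof (cases "y = 1")
    case False
    with assms have "1 < y"
      by linarith
    from weighted_Phi'_strict_mono[OF this] show ?thesis
      by (simp only: power_one less_imp_le)
  qed (simp only: power_one order_refl)
  then have "exp (- 1 / 2) * \<Phi>' 1 * exp (y\<^sup>2 / 2) \<le> exp (- y\<^sup>2 / 2) * \<Phi>' y * exp (y\<^sup>2 / 2)"
    by (rule mult_right_mono) (rule exp_ge_zero)
  also have "exp (- y\<^sup>2 / 2) * \<Phi>' y * exp (y\<^sup>2 / 2) = \<Phi>' y"
    by (simp add: exp_minus)
  finally show ?thesis .
qed

text \<open>The Euler operator \<open>y \<Phi>' - q \<Phi>\<close> annihilates the homogeneous functions of degree \<open>q\<close>;
  \<open>Dstar q\<close> is its positive root for \<open>\<Phi> = FGq q\<close>.\<close>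

definition euler_defect :: "real \<Rightarrow> real" where
  "euler_defect y = y * \<Phi>' y - q * \<Phi> y"

lemma euler_defect_0: "euler_defect 0 < 0"
  using Phi_pos[of 0] q_pos by (simp add: euler_defect_def)

lemma continuous_on_euler_defect: "continuous_on S euler_defect"
proof -
  have "continuous_on S \<Phi>" "continuous_on S \<Phi>'"
    by (rule DERIV_continuous_on[OF has_field_derivative_at_within[OF Phi_deriv]]
        DERIV_continuous_on[OF has_field_derivative_at_within[OF Phi'_deriv]])+
  then show ?thesis
    unfolding euler_defect_def by (intro continuous_intros)
qed

lemma power_wronskian_eq_euler_defect:
  assumes "y \<ge> 0"
  shows "power_wronskian q \<Phi> \<Phi>' y = exp (- y\<^sup>2 / 2) * y powr (q - 1) * euler_defect y"
proof (cases "y = 0")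
  case False
  then have "y powr q = y powr (q - 1) * y"
    using assms powr_add[of y "q - 1" 1] by simp
  then show ?thesis
    by (simp add: scaled_wronskian_def euler_defect_def algebra_simps)
qed (simp add: scaled_wronskian_def euler_defect_def)

lemma Phi_le_power_if_euler_defect_nonpos:
  assumes defect: "\<And>y. y > 0 \<Longrightarrow> euler_defect y \<le> 0" and "y \<ge> 1"
  shows "\<Phi> y \<le> \<Phi> 1 * y powr q"
proof -
  have "\<Phi> y * y powr (- q) \<le> \<Phi> 1 * 1 powr (- q)"
  proof (rule DERIV_nonpos_imp_nonincreasing[OF \<open>y \<ge> 1\<close>])
    fix s
    assume s: "1 \<le> s" "s \<le> y"
    have "s powr (- q) = s powr (- q - 1) * s"
      using s powr_add[of s "- q - 1" 1] by simp
    then have "\<Phi>' s * s powr (- q) + (- q * s powr (- q - 1)) * \<Phi> s = s powr (- q - 1) * euler_defect s"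
      by (simp add: euler_defect_def algebra_simps)
    moreover have "s powr (- q - 1) * euler_defect s \<le> 0"
      using defect[of s] s by (simp add: mult_nonneg_nonpos)
    ultimately show "\<exists>d. ((\<lambda>s. \<Phi> s * s powr (- q)) has_real_derivative d) (at s) \<and> d \<le> 0"
      using DERIV_mult[OF Phi_deriv has_real_derivative_powr, of s "- q"] s by auto
  qed
  then have "\<Phi> y * y powr (- q) * y powr q \<le> \<Phi> 1 * y powr q"
    by (intro mult_right_mono) auto
  then show ?thesis
    using \<open>y \<ge> 1\<close> by (simp add: mult.assoc flip: powr_add)
qed

text \<open>Otherwise \<open>y \<Phi>' y \<le> q \<Phi> y\<close> would bound the Gaussian growth of \<open>\<Phi>'\<close> by a power
  of \<open>y\<close>.\<close>

lemma euler_defect_pos_somewhere: "\<exists>y>0. euler_defect y > 0"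
proof (rule ccontr)
  assume "\<not> ?thesis"
  then have defect: "\<And>y. y > 0 \<Longrightarrow> euler_defect y \<le> 0"
    by (meson not_le)
  define c where "c = exp (- 1 / 2) * \<Phi>' 1"
  have "c > 0"
    using Phi'_pos[of 1] by (simp add: c_def)
  have bound: "c * y * exp (y\<^sup>2 / 2) \<le> q * \<Phi> 1 * y powr q" if "y \<ge> 1" for y
  proof -
    have "c * y * exp (y\<^sup>2 / 2) \<le> y * \<Phi>' y"
      using Phi'_lower_bound[OF that] that by (simp add: c_def mult_left_mono mult_ac)
    also have "\<dots> \<le> q * \<Phi> y"
      using defect[of y] that by (simp add: euler_defect_def)
    also have "\<dots> \<le> q * \<Phi> 1 * y powr q"
      using Phi_le_power_if_euler_defect_nonpos[OF defect that] q_pos by (simp add: mult.assoc)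
    finally show ?thesis .
  qed
  have "eventually (\<lambda>y. q * \<Phi> 1 * y powr q < c * y * exp (y\<^sup>2 / 2)) at_top"
    using \<open>c > 0\<close> by real_asymp
  then obtain N where N: "\<And>y. y \<ge> N \<Longrightarrow> q * \<Phi> 1 * y powr q < c * y * exp (y\<^sup>2 / 2)"
    by (auto simp: eventually_at_top_linorder)
  show False
    using N[of "max N 1"] bound[of "max N 1"] by linarith
qed

lemma euler_defect_neg_below_critical:
  assumes "y > 0" "2 * y\<^sup>2 + 1 \<le> q"
  shows "euler_defect y < 0"
proof -
  let ?W = "power_wronskian q \<Phi> \<Phi>'"
  have "y\<^sup>2 > 0"
    using assms(1) by simp
  then have "q > 1"
    using assms(2) by linarith
  then have "continuous_on {0..y} (\<lambda>s. exp (- s\<^sup>2 / 2) * s powr (q - 1) * euler_defect s)"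
    by (intro continuous_intros continuous_on_powr' continuous_on_euler_defect) auto
  then have "continuous_on {0..y} ?W"
    by (rule continuous_on_eq) (simp add: power_wronskian_eq_euler_defect)
  then have "?W y < ?W 0"
  proof (rule decreasing_below_critical[OF order_refl assms])
    fix s :: real
    assume "0 < s"
    then show "(?W has_real_derivative exp (- s\<^sup>2 / 2) * \<Phi> s * (q * s powr (q - 2)) * (2 * s\<^sup>2 + 1 - q)) (at s)"
      by (rule has_real_derivative_power_wronskian[OF _ solution])
    show "exp (- s\<^sup>2 / 2) * \<Phi> s * (q * s powr (q - 2)) > 0"
      using \<open>0 < s\<close> Phi_pos[of s] q_pos by simp
  qed
  moreover have "?W 0 = 0"
    by (simp add: scaled_wronskian_def)
  ultimately have "exp (- y\<^sup>2 / 2) * y powr (q - 1) * euler_defect y < 0"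
    using power_wronskian_eq_euler_defect[of y] assms(1) by simp
  then show ?thesis
    using assms(1) by (simp add: mult_less_0_iff)
qed

lemma power_wronskian_pos_iff:
  assumes "y > 0"
  shows "power_wronskian q \<Phi> \<Phi>' y > 0 \<longleftrightarrow> euler_defect y > 0"
proof -
  have "exp (- y\<^sup>2 / 2) * y powr (q - 1) > 0"
    using assms by simp
  then show ?thesis
    using assms by (auto simp: power_wronskian_eq_euler_defect zero_less_mult_iff mult_less_0_iff)
qed

lemma power_wronskian_strict_mono_above_critical:
  assumes "0 < a" "a < b" "q \<le> 2 * a\<^sup>2 + 1"
  shows "power_wronskian q \<Phi> \<Phi>' a < power_wronskian q \<Phi> \<Phi>' b"
proof (rule increasing_above_critical[OF less_imp_le[OF assms(1)] assms(2,3)])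
  have "isCont (power_wronskian q \<Phi> \<Phi>') s" if "s > 0" for s
    using has_real_derivative_power_wronskian[OF that solution] by (rule DERIV_isCont)
  then show "continuous_on {a..b} (power_wronskian q \<Phi> \<Phi>')"
    using assms(1) by (intro continuous_at_imp_continuous_on) auto
  fix s :: real
  assume "a < s"
  then have "s > 0"
    using assms(1) by simp
  then show "(power_wronskian q \<Phi> \<Phi>' has_real_derivative
      exp (- s\<^sup>2 / 2) * \<Phi> s * (q * s powr (q - 2)) * (2 * s\<^sup>2 + 1 - q)) (at s)"
    by (rule has_real_derivative_power_wronskian[OF _ solution])
  show "exp (- s\<^sup>2 / 2) * \<Phi> s * (q * s powr (q - 2)) > 0"
    using \<open>s > 0\<close> Phi_pos[of s] q_pos by simp
qed

lemma euler_defect_root_above_critical: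
  assumes "D > 0" "euler_defect D = 0"
  shows "q < 2 * D\<^sup>2 + 1"
  using euler_defect_neg_below_critical[OF assms(1)] assms(2) by force

lemma euler_defect_pos_above_root:
  assumes "D > 0" "euler_defect D = 0" "y > D"
  shows "euler_defect y > 0"
proof -
  have "power_wronskian q \<Phi> \<Phi>' D < power_wronskian q \<Phi> \<Phi>' y"
    using euler_defect_root_above_critical[OF assms(1,2)] assms
    by (intro power_wronskian_strict_mono_above_critical) auto
  moreover have "power_wronskian q \<Phi> \<Phi>' D = 0"
    using assms(1,2) by (simp add: power_wronskian_eq_euler_defect)
  ultimately show ?thesis
    using assms power_wronskian_pos_iff[of y] by simp
qed

lemma ex1_euler_defect_root: "\<exists>!D. D > 0 \<and> euler_defect D = 0"
proof -
  obtain y where y: "y > 0" "euler_defect y > 0"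
    using euler_defect_pos_somewhere by blast
  then obtain D where D: "0 \<le> D" "D \<le> y" "euler_defect D = 0"
    using IVT'[of euler_defect 0 0 y] euler_defect_0 continuous_on_euler_defect by force
  with euler_defect_0 have "D > 0"
    by (cases "D = 0") auto
  with D show ?thesis
    using euler_defect_pos_above_root by (metis less_irrefl linorder_neqE_linordered_idom)
qed

end

section \<open>The maximiser \<open>Astar\<close>\<close>

locale Fq_obstacle_ratio = positive_Fq_ode_solution +
  fixes G G' :: "real \<Rightarrow> real" and D :: real
  assumes G_solution: "Fq_ode_solution q G G'" and G_pos: "\<And>y. G y > 0" and D_pos: "D > 0"
begin

definition w :: "real \<Rightarrow> real" where
  "w A = (D powr q * \<Phi> A / \<Phi> D - A powr q) / G A"

definition w_maximiser :: "real \<Rightarrow> bool" where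
  "w_maximiser A \<longleftrightarrow> A \<in> {0..D} \<and> (\<forall>B\<in>{0..D}. w B \<le> w A)"

text \<open>\<open>exp (- A\<^sup>2 / 2)\<close> times the numerator of \<open>w' A\<close>.\<close>

definition w_deriv_numerator :: "real \<Rightarrow> real" where
  "w_deriv_numerator A = D powr q / \<Phi> D * scaled_wronskian G G' \<Phi> \<Phi>' A + power_wronskian q G G' A"

lemma G_deriv: "(G has_real_derivative G' y) (at y)"
  using G_solution by (rule Fq_ode_solution_deriv)

lemma has_real_derivative_w:
  assumes "A > 0"
  shows "(w has_real_derivative exp (A\<^sup>2 / 2) * w_deriv_numerator A / (G A)\<^sup>2) (at A)"
proof -
  define c where "c = D powr q / \<Phi> D"
  have "w = (\<lambda>A. (c * \<Phi> A - A powr q) / G A)"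
    by (simp add: fun_eq_iff w_def c_def)
  moreover have "((\<lambda>A. (c * \<Phi> A - A powr q) / G A) has_real_derivative
      ((c * \<Phi>' A - q * A powr (q - 1)) * G A - (c * \<Phi> A - A powr q) * G' A) / (G A * G A)) (at A)"
    using G_pos[of A]
    by (intro DERIV_divide DERIV_diff DERIV_cmult Phi_deriv has_real_derivative_powr assms G_deriv) simp
  moreover have "exp (A\<^sup>2 / 2) * exp (- A\<^sup>2 / 2) = 1"
    by (simp flip: exp_add)
  then have "(c * \<Phi>' A - q * A powr (q - 1)) * G A - (c * \<Phi> A - A powr q) * G' A
      = exp (A\<^sup>2 / 2) * w_deriv_numerator A"
    unfolding w_deriv_numerator_def scaled_wronskian_def c_def[symmetric]
    by (simp add: algebra_simps)
  ultimately show ?thesis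
    by (simp add: power2_eq_square)
qed

lemma has_real_derivative_w_deriv_numerator:
  assumes "A > 0"
  shows "(w_deriv_numerator has_real_derivative
           exp (- A\<^sup>2 / 2) * G A * (q * A powr (q - 2)) * (2 * A\<^sup>2 + 1 - q)) (at A)"
proof -
  have "(scaled_wronskian G G' \<Phi> \<Phi>' has_real_derivative 0) (at A)"
    using has_real_derivative_scaled_wronskian[OF G_deriv Fq_ode_solution_deriv2[OF G_solution] solution]
    by (simp add: algebra_simps)
  then show ?thesis
    unfolding w_deriv_numerator_def[abs_def]
    using has_real_derivative_power_wronskian[OF assms G_solution]
    by (intro DERIV_cong[OF DERIV_add[OF DERIV_cmult]]) auto
qed

lemma continuous_on_w:
  assumes "S \<subseteq> {0..}"
  shows "continuous_on S w"
proof -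
  have "continuous_on S \<Phi>" "continuous_on S G"
    by (rule DERIV_continuous_on[OF has_field_derivative_at_within[OF Phi_deriv]]
        DERIV_continuous_on[OF has_field_derivative_at_within[OF G_deriv]])+
  moreover have "continuous_on S (\<lambda>A. A powr q)"
    using assms q_pos by (intro continuous_on_powr' continuous_intros) auto
  ultimately show ?thesis
    unfolding w_def[abs_def] using G_pos Phi_pos[of D]
    by (intro continuous_on_divide continuous_on_diff continuous_on_mult continuous_on_const)
      (auto simp: less_imp_neq[symmetric])
qed

lemma w_D: "w D = 0"
  using Phi_pos[of D] by (simp add: w_def)

lemma w_0_pos: "w 0 > 0"
  using Phi_pos[of 0] Phi_pos[of D] G_pos[of 0] D_pos by (simp add: w_def)

lemma w_strict_mono_on:
  assumes "0 \<le> a" "a < b" and numerator: "\<And>s. a < s \<Longrightarrow> s < b \<Longrightarrow> w_deriv_numerator s > 0"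
  shows "w a < w b"
proof (rule DERIV_pos_imp_increasing_open[OF assms(2) _ continuous_on_w])
  fix s
  assume s: "a < s" "s < b"
  have "exp (s\<^sup>2 / 2) * w_deriv_numerator s / (G s)\<^sup>2 > 0"
    using numerator[OF s] G_pos[of s] by simp
  then show "\<exists>d. (w has_real_derivative d) (at s) \<and> d > 0"
    using has_real_derivative_w[of s] s assms(1) by auto
qed (use assms(1) in auto)

lemma w_maximiser_less_D:
  assumes "w_maximiser A"
  shows "A < D"
proof (rule ccontr)
  assume "\<not> A < D"
  with assms have "A = D" "w 0 \<le> w A"
    using D_pos by (auto simp: w_maximiser_def)
  then show False
    using w_0_pos w_D by simp
qed

text \<open>An interior maximiser is a critical point; beyond the critical radius the numerator of \<open>w'\<close>
  would increase from \<open>0\<close>, so \<open>w\<close> would increase up to \<open>w D = 0 < w A\<close>.\<close>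

lemma w_maximiser_critical:
  assumes max: "w_maximiser A" and "A > 0"
  shows "w_deriv_numerator A = 0" "2 * A\<^sup>2 + 1 \<le> q"
proof -
  have "A < D"
    using w_maximiser_less_D[OF max] .
  have "w A > 0"
    using max w_0_pos D_pos unfolding w_maximiser_def by force
  have "exp (A\<^sup>2 / 2) * w_deriv_numerator A / (G A)\<^sup>2 = 0"
  proof (rule DERIV_local_max[OF has_real_derivative_w[OF \<open>A > 0\<close>]])
    show "0 < min A (D - A)"
      using \<open>A > 0\<close> \<open>A < D\<close> by simp
    show "\<forall>y. \<bar>A - y\<bar> < min A (D - A) \<longrightarrow> w y \<le> w A"
      using max by (auto simp: w_maximiser_def abs_less_iff)
  qed
  then show numerator: "w_deriv_numerator A = 0"
    using G_pos[of A] by simp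
  show "2 * A\<^sup>2 + 1 \<le> q"
  proof (rule ccontr)
    assume "\<not> 2 * A\<^sup>2 + 1 \<le> q"
    have "w A < w D"
    proof (rule w_strict_mono_on)
      fix s
      assume s: "A < s" "s < D"
      have "w_deriv_numerator A < w_deriv_numerator s"
      proof (rule increasing_above_critical[where f = w_deriv_numerator and q = q
          and d = "\<lambda>s. exp (- s\<^sup>2 / 2) * G s * (q * s powr (q - 2))"])
        show "continuous_on {A..s} w_deriv_numerator"
          using \<open>A > 0\<close>
          by (intro continuous_at_imp_continuous_on ballI DERIV_isCont[OF has_real_derivative_w_deriv_numerator]) auto
        fix u
        assume "A < u"
        then show "(w_deriv_numerator has_real_derivative
            exp (- u\<^sup>2 / 2) * G u * (q * u powr (q - 2)) * (2 * u\<^sup>2 + 1 - q)) (at u)"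
          using \<open>A > 0\<close> by (intro has_real_derivative_w_deriv_numerator) simp
      qed (use \<open>A > 0\<close> s \<open>\<not> 2 * A\<^sup>2 + 1 \<le> q\<close> G_pos q_pos in auto)
      then show "w_deriv_numerator s > 0"
        using numerator by simp
    qed (use \<open>A > 0\<close> \<open>A < D\<close> in auto)
    then show False
      using \<open>w A > 0\<close> w_D by simp
  qed
qed

lemma w_maximiser_unique:
  assumes "w_maximiser A" "w_maximiser B" "A < B"
  shows False
proof -
  have "B > 0"
    using assms by (auto simp: w_maximiser_def)
  note critical = w_maximiser_critical[OF assms(2) this]
  have "w A < w B"
  proof (rule w_strict_mono_on)
    fix s
    assume s: "A < s" "s < B"
    have "w_deriv_numerator B < w_deriv_numerator s"
    proof (rule decreasing_below_critical[where f = w_deriv_numerator and q = q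
          and d = "\<lambda>s. exp (- s\<^sup>2 / 2) * G s * (q * s powr (q - 2))"])
      show "continuous_on {s..B} w_deriv_numerator"
        using s assms(1)
        by (intro continuous_at_imp_continuous_on ballI DERIV_isCont[OF has_real_derivative_w_deriv_numerator])
          (auto simp: w_maximiser_def)
      fix u
      assume "s < u"
      moreover have "s > 0"
        using s assms(1) by (auto simp: w_maximiser_def)
      ultimately show "(w_deriv_numerator has_real_derivative
          exp (- u\<^sup>2 / 2) * G u * (q * u powr (q - 2)) * (2 * u\<^sup>2 + 1 - q)) (at u)"
        by (intro has_real_derivative_w_deriv_numerator) simp
    qed (use s assms(1) critical(2) G_pos q_pos in \<open>auto simp: w_maximiser_def\<close>)
    then show "w_deriv_numerator s > 0"
      using critical(1) by simp
  qed (use assms in \<open>auto simp: w_maximiser_def\<close>)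
  moreover have "w B \<le> w A"
    using assms(1,2) by (auto simp: w_maximiser_def)
  ultimately show False
    by simp
qed

lemma ex1_w_maximiser: "\<exists>!A. w_maximiser A"
proof -
  obtain A where "A \<in> {0..D}" "\<forall>B\<in>{0..D}. w B \<le> w A"
    using continuous_attains_sup[of "{0..D}" w] continuous_on_w[of "{0..D}"] D_pos by auto
  then show ?thesis
    unfolding w_maximiser_def[symmetric]
    using w_maximiser_unique by (metis linorder_neqE_linordered_idom w_maximiser_def)
qed

end

lemma positive_Fq_ode_solution_FGq:
  assumes "q > 0"
  shows "positive_Fq_ode_solution q (FGq q) (\<lambda>y. Fq (q + 1) y - Fq (q + 1) (- y))"
  using assms by unfold_locales (auto simp: Fq_ode_solution_FGq FGq_pos)

lemma Dstar_pos:
  assumes "q > 0"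
  shows "Dstar q > 0"
proof -
  interpret positive_Fq_ode_solution q "FGq q" "\<lambda>y. Fq (q + 1) y - Fq (q + 1) (- y)"
    by (rule positive_Fq_ode_solution_FGq[OF assms])
  have root_iff: "q - D * deriv (FGq q) D / FGq q D = 0 \<longleftrightarrow> euler_defect D = 0" for D
  proof -
    have "FGq q D > 0"
      by (rule Phi_pos)
    then have "q - D * deriv (FGq q) D / FGq q D = - euler_defect D / FGq q D"
      unfolding euler_defect_def DERIV_imp_deriv[OF Phi_deriv] by (simp add: diff_divide_distrib)
    then show ?thesis
      using \<open>FGq q D > 0\<close> by simp
  qed
  have "\<exists>!D. D > 0 \<and> q - D * deriv (FGq q) D / FGq q D = 0"
    unfolding root_iff by (rule ex1_euler_defect_root)
  then have "Dstar q > 0 \<and> q - Dstar q * deriv (FGq q) (Dstar q) / FGq q (Dstar q) = 0"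
    unfolding Dstar_def by (rule theI')
  then show ?thesis
    by (rule conjunct1)
qed

lemma Fq_obstacle_ratio_FGq:
  assumes "q > 0"
  shows "Fq_obstacle_ratio q (FGq q) (\<lambda>y. Fq (q + 1) y - Fq (q + 1) (- y))
           (Gq q) (\<lambda>y. - Fq (q + 1) (- y)) (Dstar q)"
  using positive_Fq_ode_solution_FGq[OF assms] assms
  by (intro Fq_obstacle_ratio.intro Fq_obstacle_ratio_axioms.intro)
     (auto simp: Fq_ode_solution_Gq Gq_pos Dstar_pos)

lemma Astar:
  assumes "q > 0"
  shows Astar_mem: "Astar q \<in> {0..Dstar q}"
    and Astar_below_critical: "Astar q > 0 \<Longrightarrow> 2 * (Astar q)\<^sup>2 + 1 \<le> q"
proof -
  interpret Fq_obstacle_ratio q "FGq q" "\<lambda>y. Fq (q + 1) y - Fq (q + 1) (- y)"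
      "Gq q" "\<lambda>y. - Fq (q + 1) (- y)" "Dstar q"
    by (rule Fq_obstacle_ratio_FGq[OF assms])
  have "wfun q = w"
    by (simp add: fun_eq_iff wfun_def w_def)
  then have "w_maximiser (Astar q)"
    unfolding Astar_def using theI'[OF ex1_w_maximiser] by (simp add: w_maximiser_def)
  then show "Astar q \<in> {0..Dstar q}" "Astar q > 0 \<Longrightarrow> 2 * (Astar q)\<^sup>2 + 1 \<le> q"
    using w_maximiser_critical(2) by (auto simp: w_maximiser_def)
qed

section \<open>The sign of \<open>Lop (Wstar q)\<close>\<close>

lemma Lop_Wstar_outer:
  assumes "q > 0" "t < 1" "Astar q * sqrt (1 - t) < \<bar>x\<bar>"
  shows "Lop (Wstar q) t x = 0"
proof -
  have "Astar q * sqrt (1 - t) \<ge> 0"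
    using Astar_mem[OF assms(1)] assms(2) by simp
  with assms(3) have "x \<noteq> 0"
    by auto
  define \<phi> where "\<phi> y = Gq q (sgn x * y)" for y
  define V where "V s z = wfun q (Astar q) * ((1 - s) powr (q / 2) * \<phi> (z / sqrt (1 - s))) - 0 * \<bar>z\<bar> powr q"
    for s z
  define S where "S = {(s, z). s < 1 \<and> 0 < z * x \<and> Astar q * sqrt (1 - s) < \<bar>z\<bar>}"
  have "open S"
    unfolding S_def case_prod_unfold by (intro open_Collect_conj open_Collect_less continuous_intros)
  moreover have "(t, x) \<in> S"
    using assms \<open>x \<noteq> 0\<close> by (auto simp: S_def zero_less_mult_iff)
  moreover have "Wstar q s z = V s z" if "(s, z) \<in> S" for s z
  proof -
    have "sgn x = sgn z" "\<bar>z\<bar> = sgn z * z"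
      using that by (auto simp: S_def zero_less_mult_iff)
    then show ?thesis
      using that by (simp add: S_def Wstar_def V_def \<phi>_def mult_ac)
  qed
  ultimately have "Lop (Wstar q) t x = Lop V t x"
    by (rule Lop_cong_open)
  also have "\<dots> = 0"
  proof -
    have "(sgn x)\<^sup>2 = 1"
      using \<open>x \<noteq> 0\<close> by (simp add: sgn_real_def)
    then have "Fq_ode_solution q \<phi> (\<lambda>y. sgn x * - Fq (q + 1) (- (sgn x * y)))"
      unfolding \<phi>_def by (rule Fq_ode_solution_reflect[OF Fq_ode_solution_Gq[OF assms(1)]])
    then have "Lop V t x = 0 * q * \<bar>x\<bar> powr (q - 2) * (x\<^sup>2 / (1 - t) - (q - 1) / 2)"
      unfolding V_def using \<open>x \<noteq> 0\<close> by (rule Lop_scaled_profile_minus_abs_powr[OF _ assms(2)])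
    then show ?thesis
      by simp
  qed
  finally show ?thesis .
qed

lemma Lop_Wstar_inner:
  assumes "q > 0" "t < 1" "0 < \<bar>x\<bar>" "\<bar>x\<bar> < Astar q * sqrt (1 - t)"
  shows "Lop (Wstar q) t x \<le> 0"
proof -
  define V where "V s z = Dstar q powr q / FGq q (Dstar q) * ((1 - s) powr (q / 2) * FGq q (z / sqrt (1 - s)))
      - 1 * \<bar>z\<bar> powr q" for s z
  define S where "S = {(s, z). s < 1 \<and> \<bar>z\<bar> < Astar q * sqrt (1 - s)}"
  have "open S"
    unfolding S_def case_prod_unfold by (intro open_Collect_conj open_Collect_less continuous_intros)
  moreover have "(t, x) \<in> S"
    using assms by (simp add: S_def)
  moreover have "Wstar q s z = V s z" if "(s, z) \<in> S" for s z
  proof -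
    have "Astar q * sqrt (1 - s) \<le> Dstar q * sqrt (1 - s)"
      using that Astar_mem[OF assms(1)] by (intro mult_right_mono) (auto simp: S_def)
    moreover have "\<bar>z\<bar> < Astar q * sqrt (1 - s)"
      using that by (simp add: S_def)
    ultimately have "\<bar>z\<bar> < Dstar q * sqrt (1 - s)"
      by linarith
    then show ?thesis
      using that by (auto simp: S_def Wstar_def hfun_def Ubar_def V_def)
  qed
  ultimately have "Lop (Wstar q) t x = Lop V t x"
    by (rule Lop_cong_open)
  also have "\<dots> = 1 * q * \<bar>x\<bar> powr (q - 2) * (x\<^sup>2 / (1 - t) - (q - 1) / 2)"
    unfolding V_def using assms(3)
    by (intro Lop_scaled_profile_minus_abs_powr[OF Fq_ode_solution_FGq[OF assms(1)] assms(2)]) simp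
  also have "\<dots> \<le> 0"
  proof -
    have "x\<^sup>2 < (Astar q)\<^sup>2 * (1 - t)"
      using power_strict_mono[OF assms(4), of 2] assms(2,3) by (simp add: power_mult_distrib)
    moreover have "Astar q * sqrt (1 - t) > 0"
      using assms(3,4) by linarith
    then have "Astar q > 0"
      using assms(2) by (simp add: zero_less_mult_iff)
    then have "(Astar q)\<^sup>2 \<le> (q - 1) / 2"
      using Astar_below_critical[OF assms(1)] by simp
    ultimately have "x\<^sup>2 < (q - 1) / 2 * (1 - t)"
      using mult_right_mono[of "(Astar q)\<^sup>2" "(q - 1) / 2" "1 - t"] assms(2) by linarith
    then have "x\<^sup>2 / (1 - t) \<le> (q - 1) / 2"
      using assms(2) by (simp add: divide_le_eq)
    then show ?thesis
      using assms(1) by (simp add: mult_nonneg_nonpos)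
  qed
  finally show ?thesis .
qed

theorem lemma5p5:
  fixes q :: real
  assumes "q > 0"
  shows "(\<forall>t x. 0 \<le> t \<and> t < 1 \<and> \<bar>x\<bar> > Astar q * sqrt (1 - t)
            \<longrightarrow> Lop (Wstar q) t x = 0)
       \<and> (Astar q > 0 \<longrightarrow>
          (\<forall>t x. 0 \<le> t \<and> t < 1 \<and> 0 < \<bar>x\<bar> \<and> \<bar>x\<bar> < Astar q * sqrt (1 - t)
            \<longrightarrow> Lop (Wstar q) t x \<le> 0))"
  using Lop_Wstar_outer[OF assms] Lop_Wstar_inner[OF assms] by blast

end
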